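(* Let $\mathcal R_1\subseteq\mathcal R$ be a finite collection with the property: whenever $R,R'\in\mathcal R_1$ are distinct, $R\cap R'\ne\emptyset$ and $L(R)\le L(R')$, then $\mathrm{slope}(R)\not\supseteq\mathrm{slope}(R')$. Then for every $x\in[0,1)$ and every $y\in\mathbb R$, $$\#\{R\in\mathcal R_1:(x,y)\in R\}\ \le\ g(x)\ \le\ \frac1\delta\,h(x).$$
   Context: Dyadic model. Fix $0<\delta\le1$ and $w=2^{-m}$ for an integer $m\ge1$. All dyadic intervals are half-open. For $k\ge0$, $S_k$ is the set of dyadic subintervals of $[0,1)$ of length $2^{-k}$ (slopes); $c_s$ is the center of $s$. Let $u:[0,1)\to S_m$ be measurable. Let $\mathcal D$ be the dyadic intervals $I\subseteq[0,1)$ with $|I|\ge w$, $k(I)=\log_2(|I|/w)$, $\mathrm{Pop}_I(s)=\frac1{|I|}|\{x\in I:u(x)\subseteq s\}|$, $S(I)=\{s\in S_{k(I)}:\mathrm{Pop}_I(s)\ge\delta\}$. The parallelogram $P(I,s,b)=\{(x,y):x\in I,\ b\le y-c_sx<b+w\}$ ($I\in\mathcal D$, $s\in S_{k(I)}$, $b\in\mathbb R$) has $\mathrm{int}(P)=I$, $\mathrm{slope}(P)=s$, $L(P)=|I|$; $\mathcal R$ is the collection of these with $s\in S(I)$. Define $T(I)$ for $I\in\mathcal D$ recursively from larger to smaller intervals: $T([0,1))=S([0,1))$, and $T(I)=\{s\in S(I):$ there is no $K\in\mathcal D$ with $K\supsetneq I$ and $s'\in T(K)$ with $s\supseteq s'\}$.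 For $s\in T(I)$ let $\mu_I^s=|\{x\in I:u(x)\subseteq s\}|$, and let $\mu_I=\sum_{s\in T(I)}\mu_I^s$. Define $g(x)=\sum_{I\in\mathcal D}\chi_I(x)\,\#T(I)$ and $h(x)=\sum_{I\in\mathcal D}\chi_I(x)\frac{\mu_I}{|I|}$. *)

theory Defs
  imports "HOL-Analysis.Analysis"
begin

definition wid :: "nat \<Rightarrow> real" where
  "wid m = 1 / 2 ^ m"

definition dyadic :: "nat \<Rightarrow> nat \<Rightarrow> real set" where
  "dyadic k j = {real j / 2 ^ k ..< (real j + 1) / 2 ^ k}"

definition Sl :: "nat \<Rightarrow> real set set" where
  "Sl k = {dyadic k j | j. j < 2 ^ k}"

definition center :: "real set \<Rightarrow> real" where
  "center s = (Inf s + Sup s) / 2"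

definition len :: "real set \<Rightarrow> real" where
  "len I = measure lebesgue I"

definition Dset :: "nat \<Rightarrow> real set set" where
  "Dset m = {I. \<exists>k j. j < 2 ^ k \<and> I = dyadic k j \<and> len I \<ge> wid m}"

definition kI :: "nat \<Rightarrow> real set \<Rightarrow> nat" where
  "kI m I = nat \<lfloor>log 2 (len I / wid m)\<rfloor>"

definition Pop :: "(real \<Rightarrow> real set) \<Rightarrow> real set \<Rightarrow> real set \<Rightarrow> real" where
  "Pop u I s = measure lebesgue {x \<in> I. u x \<subseteq> s} / len I"

definition Sset :: "nat \<Rightarrow> real \<Rightarrow> (real \<Rightarrow> real set) \<Rightarrow> real set \<Rightarrow> real set set" where
  "Sset m \<delta> u I = {s \<in> Sl (kI m I). Pop u I s \<ge> \<delta>}"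

text \<open>Parallelograms are represented by their parameters (I, s, b); the point set is para.\<close>
definition para :: "nat \<Rightarrow> real set \<times> real set \<times> real \<Rightarrow> (real \<times> real) set" where
  "para m P = (case P of (I, s, b) \<Rightarrow>
     {(x, y). x \<in> I \<and> b \<le> y - center s * x \<and> y - center s * x < b + wid m})"

definition intv :: "real set \<times> real set \<times> real \<Rightarrow> real set" where
  "intv P = fst P"

definition slope :: "real set \<times> real set \<times> real \<Rightarrow> real set" where
  "slope P = fst (snd P)"

definition Lp :: "real set \<times> real set \<times> real \<Rightarrow> real" where
  "Lp P = len (intv P)"

definition Rset :: "nat \<Rightarrow> real \<Rightarrow> (real \<Rightarrow> real set) \<Rightarrow> (real set \<times> real set \<times> real) set" where
  "Rset m \<delta> u = {(I, s, b). I \<in> Dset m \<and> s \<in> Sset m \<delta> u I}"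

text \<open>T(I), defined recursively from larger to smaller intervals.
  TT n I agrees with T(I) for all I in D with |I| >= 2^-n; T(I) = TT m I.\<close>
fun TT :: "nat \<Rightarrow> real \<Rightarrow> (real \<Rightarrow> real set) \<Rightarrow> nat \<Rightarrow> real set \<Rightarrow> real set set" where
  "TT m \<delta> u 0 I = Sset m \<delta> u I"
| "TT m \<delta> u (Suc n) I =
     (if len I \<ge> 1 / 2 ^ n then TT m \<delta> u n I
      else {s \<in> Sset m \<delta> u I. \<not> (\<exists>K \<in> Dset m. I \<subset> K \<and> (\<exists>s' \<in> TT m \<delta> u n K. s' \<subseteq> s))})"

definition Tset :: "nat \<Rightarrow> real \<Rightarrow> (real \<Rightarrow> real set) \<Rightarrow> real set \<Rightarrow> real set set" where
  "Tset m \<delta> u I = TT m \<delta> u m I"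

definition mu :: "nat \<Rightarrow> real \<Rightarrow> (real \<Rightarrow> real set) \<Rightarrow> real set \<Rightarrow> real" where
  "mu m \<delta> u I = (\<Sum>s \<in> Tset m \<delta> u I. measure lebesgue {x \<in> I. u x \<subseteq> s})"

definition gfun :: "nat \<Rightarrow> real \<Rightarrow> (real \<Rightarrow> real set) \<Rightarrow> real \<Rightarrow> real" where
  "gfun m \<delta> u x = (\<Sum>I \<in> Dset m. indicator I x * real (card (Tset m \<delta> u I)))"

definition hfun :: "nat \<Rightarrow> real \<Rightarrow> (real \<Rightarrow> real set) \<Rightarrow> real \<Rightarrow> real" where
  "hfun m \<delta> u x = (\<Sum>I \<in> Dset m. indicator I x * (mu m \<delta> u I / len I))"

end

theory Submission imports Defs begin

(* Both inequalities are pointwise.  The right one is termwise: every slope s in T(I)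
   satisfies Pop_I(s) >= delta, so #T(I) <= mu_I / (delta |I|).

   The left one is an injection.  Every parallelogram R = P(I,s,b) in R has an
   "anchor": a pair (K,t) with I <= K in D, t in T(K) and t <= s.
   If R, R' in R1 both contain (x,y) and share an anchor (K,t), their slopes meet in the
   nonempty dyadic interval t, so the slope of the parallelogram with the longer interval
   is contained in the other slope, which the hypothesis on R1 forbids unless R = R'.
   Hence the parallelograms through (x,y) inject into the pairs (K,t) with x in K and
   t in T(K), and there are exactly g(x) of those. *)

section \<open>Dyadic intervals\<close>

lemma len_dyadic: "len (dyadic k j) = 1 / 2^k"
  unfolding len_def dyadic_def by (simp add: divide_simps)

lemma left_end_in_dyadic: "real j / 2^k \<in> dyadic k j"
  unfolding dyadic_def by (simp add: divide_strict_right_mono)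

lemma dyadic_nonempty: "dyadic k j \<noteq> {}"
  using left_end_in_dyadic by blast

lemma inverse_pow2_le_iff: "((1::real) / 2^a \<le> 1 / 2^b) \<longleftrightarrow> b \<le> a"
  by (simp add: divide_simps)

text \<open>In units of 2^-k' the intervals are [j 2^d, (j+1) 2^d) and [j', j'+1) with d = k' - k;
  since all endpoints are integers, overlap forces containment.\<close>
lemma dyadic_nested:
  assumes "k \<le> k'" and "dyadic k j \<inter> dyadic k' j' \<noteq> {}"
  shows "dyadic k' j' \<subseteq> dyadic k j"
proof -
  define d where "d = k' - k"
  have scale: "(2::real)^k' = 2^k * 2^d"
    using assms(1) unfolding d_def by (simp add: power_add[symmetric])
  from assms(2) have overlap: "real j / 2^k < (real j' + 1) / 2^k'" "real j' / 2^k' < (real j + 1) / 2^k"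
    unfolding dyadic_def by auto
  have "real j * 2^d < real j' + 1" "real j' < (real j + 1) * 2^d"
    using overlap unfolding scale by (simp_all add: field_simps)
  hence "real (j * 2^d) < real (j' + 1)" "real j' < real ((j + 1) * 2^d)"
    by (simp_all add: algebra_simps)
  hence "j * 2^d < j' + 1" "j' < (j + 1) * 2^d" by (simp_all only: of_nat_less_iff)
  hence "real (j * 2^d) \<le> real j'" "real (j' + 1) \<le> real ((j + 1) * 2^d)"
    by (simp_all only: of_nat_le_iff)
  hence "real j * 2^d \<le> real j'" "real j' + 1 \<le> (real j + 1) * 2^d"
    by (simp_all add: algebra_simps)
  hence "real j * 2^d / 2^k' \<le> real j' / 2^k'" "(real j' + 1) / 2^k' \<le> (real j + 1) * 2^d / 2^k'"
    by (simp_all add: divide_right_mono)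
  hence "real j / 2^k \<le> real j' / 2^k'" "(real j' + 1) / 2^k' \<le> (real j + 1) / 2^k"
    by (simp_all add: scale)
  thus ?thesis unfolding dyadic_def by auto
qed

lemma dyadic_subset_level:
  assumes "dyadic k j \<subseteq> dyadic k' j'"
  shows "k' \<le> k"
proof (rule ccontr)
  assume "\<not> k' \<le> k"
  moreover have "dyadic k j \<inter> dyadic k' j' \<noteq> {}"
    using assms dyadic_nonempty[of k j] by blast
  ultimately have "dyadic k' j' \<subseteq> dyadic k j" by (intro dyadic_nested) auto
  hence "(1::real) / 2^k = 1 / 2^k'" using assms by (metis len_dyadic subset_antisym)
  hence "k' \<le> k" using inverse_pow2_le_iff by (metis order_refl)
  with \<open>\<not> k' \<le> k\<close> show False by simp
qed

lemma dyadic_subset_same_level: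
  assumes "dyadic k j \<subseteq> dyadic k j'"
  shows "j = j'"
proof -
  have "real j / 2^k \<in> dyadic k j'" using assms left_end_in_dyadic by blast
  hence "real j' / 2^k \<le> real j / 2^k" "real j / 2^k < (real j' + 1) / 2^k"
    unfolding dyadic_def by auto
  hence "real j' \<le> real j" "real j < real j' + 1"
    by (simp_all add: divide_le_cancel divide_less_cancel)
  thus "j = j'" by linarith
qed

section \<open>The collections D, S_k and T(I)\<close>

lemma Dset_iff: "I \<in> Dset m \<longleftrightarrow> (\<exists>k j. k \<le> m \<and> j < 2^k \<and> I = dyadic k j)"
  unfolding Dset_def wid_def by (auto simp: len_dyadic inverse_pow2_le_iff) blast

lemma finite_Dset: "finite (Dset m)"
proof -
  have "Dset m \<subseteq> (\<lambda>(k, j). dyadic k j) ` ({..m} \<times> {..<2^m})"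
  proof
    fix I assume "I \<in> Dset m"
    then obtain k j where kj: "k \<le> m" "j < 2^k" "I = dyadic k j" by (auto simp: Dset_iff)
    have "j < 2^m" using kj power_increasing[of k m "2::nat"] by linarith
    thus "I \<in> (\<lambda>(k, j). dyadic k j) ` ({..m} \<times> {..<2^m})"
      using kj by (auto intro!: image_eqI[where x="(k, j)"])
  qed
  thus ?thesis by (rule finite_subset) auto
qed

lemma kI_dyadic: "k \<le> m \<Longrightarrow> kI m (dyadic k j) = m - k"
proof -
  assume "k \<le> m"
  hence "len (dyadic k j) / wid m = 2^(m - k)" by (simp add: len_dyadic wid_def power_diff)
  thus ?thesis unfolding kI_def by simp
qed

lemma finite_Sl: "finite (Sl k)"
proof -
  have "Sl k = dyadic k ` {..<2^k}" unfolding Sl_def by auto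
  thus ?thesis by simp
qed

lemma TT_subset_Sset: "TT m \<delta> u n I \<subseteq> Sset m \<delta> u I"
  by (induction n) auto

lemma Tset_subset_Sset: "Tset m \<delta> u I \<subseteq> Sset m \<delta> u I"
  unfolding Tset_def by (rule TT_subset_Sset)

lemma finite_Tset: "finite (Tset m \<delta> u I)"
proof -
  have "Tset m \<delta> u I \<subseteq> Sl (kI m I)" using Tset_subset_Sset unfolding Sset_def by blast
  thus ?thesis using finite_Sl by (rule finite_subset)
qed

lemma Tset_nonempty_members:
  assumes "t \<in> Tset m \<delta> u K"
  shows "t \<noteq> {}"
proof -
  have "t \<in> Sl (kI m K)" using assms Tset_subset_Sset unfolding Sset_def by blast
  thus ?thesis unfolding Sl_def using dyadic_nonempty by auto
qed

text \<open>A strictly larger interval of D lies at a strictly smaller level, so it is at least twice as long.\<close>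
lemma Dset_psubset_len:
  assumes "I \<in> Dset m" "K \<in> Dset m" "I \<subset> K"
  shows "2 * len I \<le> len K"
proof -
  obtain a b c d where ab: "I = dyadic a b" and cd: "K = dyadic c d"
    using assms(1,2) by (auto simp: Dset_iff)
  have "c \<le> a" using assms(3) ab cd dyadic_subset_level by blast
  moreover have "c \<noteq> a" using assms(3) ab cd dyadic_subset_same_level by blast
  ultimately have "Suc c \<le> a" by simp
  hence "(1::real) / 2^a \<le> 1 / 2^Suc c" by (simp only: inverse_pow2_le_iff)
  thus ?thesis using ab cd by (simp add: len_dyadic)
qed

lemma Dset_subset_len:
  assumes "I \<in> Dset m" "K \<in> Dset m" "I \<subseteq> K"
  shows "len I \<le> len K"
proof -
  obtain a b c d where ab: "I = dyadic a b" and cd: "K = dyadic c d"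
    using assms(1,2) by (auto simp: Dset_iff)
  have "c \<le> a" using assms(3) ab cd dyadic_subset_level by blast
  thus ?thesis using ab cd by (simp add: len_dyadic inverse_pow2_le_iff)
qed

section \<open>Covering lemma and anchors\<close>

text \<open>Every popular slope s of I is refined by a slope of T(K) for some ancestor K of I.
  The n-th stage TT n already has this property for intervals of length at least 2^-n.\<close>
lemma TT_covers:
  assumes "I \<in> Dset m" "1 / 2^n \<le> len I" "s \<in> Sset m \<delta> u I"
  shows "\<exists>K\<in>Dset m. I \<subseteq> K \<and> (\<exists>t\<in>TT m \<delta> u n K. t \<subseteq> s)"
  using assms
proof (induction n arbitrary: I s)
  case 0
  thus ?case by auto
next
  case (Suc n)
  have stable: "TT m \<delta> u (Suc n) K = TT m \<delta> u n K" if "1 / 2^n \<le> len K" for K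
    using that by simp
  show ?case
  proof (cases "1 / 2^n \<le> len I")
    case True
    then obtain K t where K: "K \<in> Dset m" "I \<subseteq> K" "t \<in> TT m \<delta> u n K" "t \<subseteq> s"
      using Suc by blast
    have "1 / 2^n \<le> len K" using True Dset_subset_len[OF Suc.prems(1) K(1,2)] by linarith
    thus ?thesis using K stable by auto
  next
    case False
    show ?thesis
    proof (cases "s \<in> TT m \<delta> u (Suc n) I")
      case True
      thus ?thesis using Suc.prems(1) by blast
    next
      case not_kept: False
      then obtain K t where K: "K \<in> Dset m" "I \<subset> K" "t \<in> TT m \<delta> u n K" "t \<subseteq> s"
        using False Suc.prems(3) by auto
      have "2 * len I \<le> len K" using Dset_psubset_len[OF Suc.prems(1) K(1,2)] .
      hence "1 / 2^n \<le> len K" using Suc.prems(2) by simp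
      thus ?thesis using K stable by auto
    qed
  qed
qed

text \<open>Covering lemma: since every interval of D has length at least 2^-m, stage m suffices.\<close>
lemma Tset_covers:
  assumes "I \<in> Dset m" "s \<in> Sset m \<delta> u I"
  shows "\<exists>K\<in>Dset m. I \<subseteq> K \<and> (\<exists>t\<in>Tset m \<delta> u K. t \<subseteq> s)"
proof -
  have "1 / 2^m \<le> len I" using assms(1) unfolding Dset_def wid_def by auto
  thus ?thesis using TT_covers[OF assms(1) _ assms(2)] unfolding Tset_def by blast
qed

definition anchored ::
    "nat \<Rightarrow> real \<Rightarrow> (real \<Rightarrow> real set) \<Rightarrow> real set \<times> real set \<times> real \<Rightarrow> real set \<times> real set \<Rightarrow> bool"
  where "anchored m \<delta> u R p \<longleftrightarrow>
    fst p \<in> Dset m \<and> intv R \<subseteq> fst p \<and> snd p \<in> Tset m \<delta> u (fst p) \<and> snd p \<subseteq> slope R"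

definition anchor ::
    "nat \<Rightarrow> real \<Rightarrow> (real \<Rightarrow> real set) \<Rightarrow> real set \<times> real set \<times> real \<Rightarrow> real set \<times> real set"
  where "anchor m \<delta> u R = (SOME p. anchored m \<delta> u R p)"

lemma anchor_anchored:
  assumes "R \<in> Rset m \<delta> u"
  shows "anchored m \<delta> u R (anchor m \<delta> u R)"
proof -
  obtain I s b where R: "R = (I, s, b)" "I \<in> Dset m" "s \<in> Sset m \<delta> u I"
    using assms unfolding Rset_def by auto
  then obtain K t where "K \<in> Dset m" "I \<subseteq> K" "t \<in> Tset m \<delta> u K" "t \<subseteq> s"
    using Tset_covers by blast
  hence "anchored m \<delta> u R (K, t)" unfolding anchored_def R intv_def slope_def by simp
  thus ?thesis unfolding anchor_def by (rule someI)
qed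

lemma Rset_dyadic:
  assumes "R \<in> Rset m \<delta> u"
  obtains a j p where "a \<le> m" "intv R = dyadic a j" "slope R = dyadic (m - a) p"
proof -
  obtain I s b where R: "R = (I, s, b)" "I \<in> Dset m" "s \<in> Sset m \<delta> u I"
    using assms unfolding Rset_def by auto
  then obtain a j where aj: "a \<le> m" "I = dyadic a j" by (auto simp: Dset_iff)
  then obtain p where "s = dyadic (m - a) p"
    using R(3) kI_dyadic unfolding Sset_def Sl_def by auto
  thus ?thesis using that aj R(1) unfolding intv_def slope_def by simp
qed

lemma Rset_slopes_nested:
  assumes "R \<in> Rset m \<delta> u" "R' \<in> Rset m \<delta> u" "Lp R \<le> Lp R'"
    and "slope R \<inter> slope R' \<noteq> {}"
  shows "slope R' \<subseteq> slope R"
proof -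
  obtain a j p where R: "a \<le> m" "intv R = dyadic a j" "slope R = dyadic (m - a) p"
    using Rset_dyadic[OF assms(1)] by blast
  obtain a' j' p' where R': "a' \<le> m" "intv R' = dyadic a' j'" "slope R' = dyadic (m - a') p'"
    using Rset_dyadic[OF assms(2)] by blast
  have "(1::real) / 2^a \<le> 1 / 2^a'"
    using assms(3) unfolding Lp_def R(2) R'(2) len_dyadic .
  hence "m - a \<le> m - a'" by (simp add: inverse_pow2_le_iff)
  thus ?thesis using dyadic_nested assms(4) R(3) R'(3) by metis
qed

lemma anchor_inj_on_through_point:
  assumes R1: "R1 \<subseteq> Rset m \<delta> u"
    and nest: "\<forall>R \<in> R1. \<forall>R' \<in> R1. R \<noteq> R' \<and> para m R \<inter> para m R' \<noteq> {} \<and> Lp R \<le> Lp R'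
           \<longrightarrow> \<not> (slope R' \<subseteq> slope R)"
  shows "inj_on (anchor m \<delta> u) {R \<in> R1. (x, y) \<in> para m R}"
proof -
  have same_anchor_eq: "R = R'"
    if R: "R \<in> R1" "(x, y) \<in> para m R" and R': "R' \<in> R1" "(x, y) \<in> para m R'"
      and le: "Lp R \<le> Lp R'" and same: "anchor m \<delta> u R = anchor m \<delta> u R'" for R R'
  proof (rule ccontr)
    assume "R \<noteq> R'"
    moreover have "para m R \<inter> para m R' \<noteq> {}" using R(2) R'(2) by blast
    ultimately have not_sub: "\<not> slope R' \<subseteq> slope R" using nest R(1) R'(1) le by blast
    let ?t = "snd (anchor m \<delta> u R)"
    have "anchored m \<delta> u R (anchor m \<delta> u R)" "anchored m \<delta> u R' (anchor m \<delta> u R)"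
      using anchor_anchored R(1) R'(1) R1 same by (metis subsetD)+
    hence "?t \<subseteq> slope R" "?t \<subseteq> slope R'" "?t \<noteq> {}"
      unfolding anchored_def by (auto dest: Tset_nonempty_members)
    hence "slope R \<inter> slope R' \<noteq> {}" by blast
    thus False using Rset_slopes_nested R(1) R'(1) R1 le not_sub by blast
  qed
  show ?thesis
  proof (rule inj_onI)
    fix R R' assume "R \<in> {R \<in> R1. (x, y) \<in> para m R}" "R' \<in> {R \<in> R1. (x, y) \<in> para m R}"
      and "anchor m \<delta> u R = anchor m \<delta> u R'"
    thus "R = R'" using same_anchor_eq[of R R'] same_anchor_eq[of R' R] by (cases "Lp R \<le> Lp R'") auto
  qed
qed

section \<open>The two inequalities\<close>

lemma gfun_eq_card:
  "gfun m \<delta> u x = real (card (Sigma {I \<in> Dset m. x \<in> I} (Tset m \<delta> u)))"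
proof -
  have "card (Sigma {I \<in> Dset m. x \<in> I} (Tset m \<delta> u)) = (\<Sum>I | I \<in> Dset m \<and> x \<in> I. card (Tset m \<delta> u I))"
    using finite_Dset finite_Tset by (simp add: card_SigmaI)
  also have "real \<dots> = (\<Sum>I | I \<in> Dset m \<and> x \<in> I. real (card (Tset m \<delta> u I)))"
    by simp
  also have "\<dots> = (\<Sum>I\<in>Dset m. if x \<in> I then real (card (Tset m \<delta> u I)) else 0)"
    by (rule sum.inter_filter[OF finite_Dset])
  also have "\<dots> = gfun m \<delta> u x"
    unfolding gfun_def by (rule sum.cong) (auto simp: indicator_def)
  finally show ?thesis by simp
qed

text \<open>First inequality: anchors inject the parallelograms through (x,y) into the pairs
  counted by g(x).\<close>
lemma card_through_point_le_gfun:
  assumes "R1 \<subseteq> Rset m \<delta> u"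
    and "\<forall>R \<in> R1. \<forall>R' \<in> R1. R \<noteq> R' \<and> para m R \<inter> para m R' \<noteq> {} \<and> Lp R \<le> Lp R'
           \<longrightarrow> \<not> (slope R' \<subseteq> slope R)"
  shows "real (card {R \<in> R1. (x, y) \<in> para m R}) \<le> gfun m \<delta> u x"
proof -
  let ?A = "{R \<in> R1. (x, y) \<in> para m R}"
  let ?B = "Sigma {I \<in> Dset m. x \<in> I} (Tset m \<delta> u)"
  have "anchor m \<delta> u ` ?A \<subseteq> ?B"
  proof
    fix p assume "p \<in> anchor m \<delta> u ` ?A"
    then obtain R where R: "R \<in> ?A" "p = anchor m \<delta> u R" by blast
    have "x \<in> intv R" using R(1) unfolding para_def intv_def by (auto split: prod.splits)
    moreover have "anchored m \<delta> u R p" using anchor_anchored R assms(1) by blast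
    ultimately show "p \<in> ?B" unfolding anchored_def
      by (cases p) auto
  qed
  moreover have "finite ?B" using finite_Dset finite_Tset by simp
  ultimately have "card ?A \<le> card ?B"
    using card_inj_on_le anchor_inj_on_through_point[OF assms] by blast
  thus ?thesis unfolding gfun_eq_card by simp
qed

text \<open>Each slope of T(I) is popular, so #T(I) \<le> mu_I / (\<delta> |I|).\<close>
lemma card_Tset_le_mu: "\<delta> * real (card (Tset m \<delta> u I)) \<le> mu m \<delta> u I / len I"
proof -
  have "\<delta> * real (card (Tset m \<delta> u I)) = (\<Sum>s\<in>Tset m \<delta> u I. \<delta>)" by simp
  also have "\<dots> \<le> (\<Sum>s\<in>Tset m \<delta> u I. measure lebesgue {x \<in> I. u x \<subseteq> s} / len I)"
    using Tset_subset_Sset[of m \<delta> u I] by (intro sum_mono) (auto simp: Sset_def Pop_def)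
  also have "\<dots> = mu m \<delta> u I / len I" unfolding mu_def sum_divide_distrib ..
  finally show ?thesis .
qed

text \<open>Second inequality, termwise in the sums defining g and h.\<close>
lemma gfun_le_hfun:
  assumes "0 < \<delta>"
  shows "gfun m \<delta> u x \<le> hfun m \<delta> u x / \<delta>"
  unfolding gfun_def hfun_def sum_divide_distrib
proof (rule sum_mono)
  fix I
  have "real (card (Tset m \<delta> u I)) \<le> mu m \<delta> u I / len I / \<delta>"
    using card_Tset_le_mu pos_le_divide_eq[OF assms] by (metis mult.commute)
  thus "indicator I x * real (card (Tset m \<delta> u I)) \<le> indicator I x * (mu m \<delta> u I / len I) / \<delta>"
    by (simp add: indicator_def)
qed

theorem lemma4:
  fixes m :: nat and \<delta> :: real and u :: "real \<Rightarrow> real set"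
    and R1 :: "(real set \<times> real set \<times> real) set"
  assumes "m \<ge> 1" and "0 < \<delta>" and "\<delta> \<le> 1"
    and "\<forall>x \<in> {0..<1}. u x \<in> Sl m"
    and "\<forall>s \<in> Sl m. {x \<in> {0..<1}. u x = s} \<in> sets lebesgue"
    and "finite R1" and "R1 \<subseteq> Rset m \<delta> u"
    and "\<forall>R \<in> R1. \<forall>R' \<in> R1. R \<noteq> R' \<and> para m R \<inter> para m R' \<noteq> {} \<and> Lp R \<le> Lp R'
           \<longrightarrow> \<not> (slope R' \<subseteq> slope R)"
    and "x \<in> {0..<1}"
  shows "real (card {R \<in> R1. (x, y) \<in> para m R}) \<le> gfun m \<delta> u x
         \<and> gfun m \<delta> u x \<le> hfun m \<delta> u x / \<delta>"
  using card_through_point_le_gfun[OF assms(7,8)] gfun_le_hfun[OF assms(2)] by blast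

end
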